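(* Let $V$ be a finite-dimensional vector space over an algebraically closed field $\mathbf{k}$ of characteristic $p$, of dimension $\mathbf{n}\ge3$, equipped with a bilinear form $(,)$ and a quadratic form $Q$ such that either (i) $Q=0$, $(x,x)=0$ for all $x$, and $V^\perp=0$; or (ii) $Q\ne0$, $(x,y)=Q(x+y)-Q(x)-Q(y)$ for all $x,y$, and $Q|_{V^\perp}$ is injective. Let $\kappa\in\{0,1\}$ with $\mathbf{n}-\kappa$ even, $n=(\mathbf{n}-\kappa)/2$. Let $p_1\ge\dots\ge p_\sigma\ge1$ be integers with sum $n$, and if $\kappa=1$ set $p_{\sigma+1}=1/2$. Let $g\in Is(V)$ and let $(w^t_i)$ be a $(g,p_* )$-adapted collection. Let $e\le f$ in $[1,\sigma+\kappa]$ and assume that the subspace $\mathcal{W}_{e,f}$ spanned by $\{w^x_i;\ x\in[e,f],\ i\in[0,2p_x-1]\}$ is $g$-stable. Then the radical of $(,)|_{\mathcal{W}_{e,f}}$ is $0$, unless $\kappa=1$, $f=\sigma+1$ and $p=2$, in which case this radical equals $V^\perp$.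
   Context: $V^\perp=\{x\in V;(x,V)=0\}$. $Is(V)$ is the group of $g\in GL(V)$ with $(gx,gy)=(x,y)$ and $Q(gx)=Q(x)$ for all $x,y$. A collection $w^t_i\in V$ ($t\in[1,\sigma+\kappa]$, $i\in\mathbb{Z}$) is $(g,p_* )$-adapted if: (a) $w^t_{i+1}=gw^t_i$; (b) for $t\in[1,\sigma]$, $(w^t_i,w^t_j)=0$ if $|i-j|<p_t$ and $=1$ if $j-i=p_t$; (c) $(w^t_i,w^r_j)=0$ if $0\le i-j+p_r<2p_t$ and $1\le t<r\le\sigma$; (d) if $\kappa=1$, $(w^{\sigma+1}_i,w^{\sigma+1}_i)=2$; (e) if $\kappa=1$, $(w^t_i,w^{\sigma+1}_j)=0$ whenever $0\le i-j<2p_t$, $1\le t\le\sigma$; (f) $Q(w^t_i)=0$ for $t\in[1,\sigma]$, and $Q(w^{\sigma+1}_i)=1$ if $\kappa=1$. *)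

theory Defs
  imports Main "HOL-Computational_Algebra.Polynomial"
begin

definition alg_closed :: "'k::field itself \<Rightarrow> bool" where
  "alg_closed _ \<longleftrightarrow> (\<forall>q :: 'k poly. degree q > 0 \<longrightarrow> (\<exists>x. poly q x = 0))"

definition bilinear_form :: "('k::field \<Rightarrow> 'v::ab_group_add \<Rightarrow> 'v) \<Rightarrow> ('v \<Rightarrow> 'v \<Rightarrow> 'k) \<Rightarrow> bool" where
  "bilinear_form scale B \<longleftrightarrow>
     (\<forall>x. Vector_Spaces.linear scale (*) (\<lambda>y. B x y)) \<and>
     (\<forall>y. Vector_Spaces.linear scale (*) (\<lambda>x. B x y))"

definition quadratic_form :: "('k::field \<Rightarrow> 'v::ab_group_add \<Rightarrow> 'v) \<Rightarrow> ('v \<Rightarrow> 'k) \<Rightarrow> bool" where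
  "quadratic_form scale Q \<longleftrightarrow>
     (\<forall>a x. Q (scale a x) = a^2 * Q x) \<and>
     bilinear_form scale (\<lambda>x y. Q (x + y) - Q x - Q y)"

definition Vperp :: "('v \<Rightarrow> 'v \<Rightarrow> 'k::zero) \<Rightarrow> 'v set" where
  "Vperp B = {x. \<forall>y. B x y = 0}"

definition radical_on :: "('v \<Rightarrow> 'v \<Rightarrow> 'k::zero) \<Rightarrow> 'v set \<Rightarrow> 'v set" where
  "radical_on B W = {x \<in> W. \<forall>y\<in>W. B x y = 0}"

definition isometry :: "('k::field \<Rightarrow> 'v::ab_group_add \<Rightarrow> 'v) \<Rightarrow> ('v \<Rightarrow> 'v \<Rightarrow> 'k) \<Rightarrow> ('v \<Rightarrow> 'k) \<Rightarrow> ('v \<Rightarrow> 'v) \<Rightarrow> bool" where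
  "isometry scale B Q g \<longleftrightarrow> Vector_Spaces.linear scale scale g \<and> bij g \<and>
     (\<forall>x y. B (g x) (g y) = B x y) \<and> (\<forall>x. Q (g x) = Q x)"

text \<open>(g,p_*)-adapted collection w t i, t in [1, sigma+kappa], i an integer.
  The parts p_t are given for t in [1,sigma]; p_(sigma+1) = 1/2 only enters via 2 p_(sigma+1) = 1.\<close>
definition adapted ::
  "('v \<Rightarrow> 'v \<Rightarrow> 'k::field) \<Rightarrow> ('v \<Rightarrow> 'k) \<Rightarrow> ('v \<Rightarrow> 'v) \<Rightarrow> nat \<Rightarrow> nat \<Rightarrow> (nat \<Rightarrow> nat)
     \<Rightarrow> (nat \<Rightarrow> int \<Rightarrow> 'v) \<Rightarrow> bool" where
  "adapted B Q g \<sigma> \<kappa> p w \<longleftrightarrow>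
     (\<forall>t\<in>{1..\<sigma>+\<kappa>}. \<forall>i. w t (i + 1) = g (w t i)) \<and>
     (\<forall>t\<in>{1..\<sigma>}. \<forall>i j. (\<bar>i - j\<bar> < int (p t) \<longrightarrow> B (w t i) (w t j) = 0) \<and>
                        (j - i = int (p t) \<longrightarrow> B (w t i) (w t j) = 1)) \<and>
     (\<forall>t r i j. 1 \<le> t \<and> t < r \<and> r \<le> \<sigma> \<and> 0 \<le> i - j + int (p r) \<and> i - j + int (p r) < 2 * int (p t)
                 \<longrightarrow> B (w t i) (w r j) = 0) \<and>
     (\<kappa> = 1 \<longrightarrow> (\<forall>i. B (w (\<sigma>+1) i) (w (\<sigma>+1) i) = 2)) \<and>
     (\<kappa> = 1 \<longrightarrow> (\<forall>t i j. 1 \<le> t \<and> t \<le> \<sigma> \<and> 0 \<le> i - j \<and> i - j < 2 * int (p t)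
                 \<longrightarrow> B (w t i) (w (\<sigma>+1) j) = 0)) \<and>
     (\<forall>t\<in>{1..\<sigma>}. \<forall>i. Q (w t i) = 0) \<and>
     (\<kappa> = 1 \<longrightarrow> (\<forall>i. Q (w (\<sigma>+1) i) = 1))"

definition twice_p :: "nat \<Rightarrow> (nat \<Rightarrow> nat) \<Rightarrow> nat \<Rightarrow> nat" where
  "twice_p \<sigma> p x = (if x \<le> \<sigma> then 2 * p x else 1)"

definition W_gens :: "nat \<Rightarrow> (nat \<Rightarrow> nat) \<Rightarrow> (nat \<Rightarrow> int \<Rightarrow> 'v) \<Rightarrow> nat \<Rightarrow> nat \<Rightarrow> 'v set" where
  "W_gens \<sigma> p w e f = {w x (int i) | x i. x \<in> {e..f} \<and> i < twice_p \<sigma> p x}"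

end

theory Submission
  imports Defs "HOL-Library.Product_Lexorder"
begin

text \<open>Index the generators of W(e,f) by the pairs (t, i) with 0 \<le> i < 2 p(t). Their Gram
  matrix is nonsingular: each generator w(t,i) pairs nontrivially with its partner w(t, i \<plusminus> p(t)),
  and the vanishing conditions of an adapted collection make the matrix triangular for a suitable
  order on the indices. Hence the radical of the span is 0. If \<kappa> = 1 and f = \<sigma> + 1, the extra
  generator u = w(\<sigma>+1, 0) is orthogonal to all the others and (u, u) = 2, so the radical lies on
  the line through u and is 0 unless the characteristic is 2. In characteristic 2, counting
  dimensions shows that u and the generators of all \<sigma> blocks form a basis of V, so Vperp B is that
  same line.\<close>

definition nonsingular_on :: "('i \<Rightarrow> 'i \<Rightarrow> 'k::field) \<Rightarrow> 'i set \<Rightarrow> bool" where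
  "nonsingular_on G I \<longleftrightarrow> (\<forall>c. (\<forall>m\<in>I. (\<Sum>k\<in>I. c k * G k m) = 0) \<longrightarrow> (\<forall>k\<in>I. c k = 0))"

lemma nonsingular_on_if_triangular:
  fixes G :: "'i \<Rightarrow> 'i \<Rightarrow> 'k::field" and \<mu> :: "'i \<Rightarrow> 'a::wellorder"
  assumes "finite I"
    and test_in: "\<And>k. k \<in> I \<Longrightarrow> \<tau> k \<in> I"
    and diag: "\<And>k. k \<in> I \<Longrightarrow> G k (\<tau> k) \<noteq> 0"
    and lower: "\<And>k k'. k \<in> I \<Longrightarrow> k' \<in> I \<Longrightarrow> k' \<noteq> k \<Longrightarrow> G k' (\<tau> k) \<noteq> 0 \<Longrightarrow>
      \<mu> k' < \<mu> k"
  shows "nonsingular_on G I"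
  unfolding nonsingular_on_def
proof (intro allI impI ballI)
  fix c k assume eqs: "\<forall>m\<in>I. (\<Sum>k\<in>I. c k * G k m) = 0" and "k \<in> I"
  then show "c k = 0"
  proof (induction "\<mu> k" arbitrary: k rule: less_induct)
    case less
    have "c k' * G k' (\<tau> k) = 0" if "k' \<in> I - {k}" for k'
      using that less lower[of k k'] by (cases "G k' (\<tau> k) = 0") auto
    then have "(\<Sum>k'\<in>I. c k' * G k' (\<tau> k)) = c k * G k (\<tau> k)"
      using \<open>finite I\<close> less.prems(2) by (simp add: sum.remove sum.neutral)
    then show "c k = 0"
      using eqs test_in[OF less.prems(2)] diag[OF less.prems(2)] by simp
  qed
qed

lemma nonsingular_on_rows_distinct:
  fixes G :: "'i \<Rightarrow> 'i \<Rightarrow> 'k::field"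
  assumes "nonsingular_on G I" and "finite I" and "k1 \<in> I" "k2 \<in> I"
    and "\<And>m. m \<in> I \<Longrightarrow> G k1 m = G k2 m"
  shows "k1 = k2"
proof (rule ccontr)
  assume ne: "k1 \<noteq> k2"
  define c :: "'i \<Rightarrow> 'k" where "c k = (if k = k1 then 1 else if k = k2 then -1 else 0)" for k
  have "c k * G k m = (if k = k1 then G k m else 0) - (if k = k2 then G k m else 0)" for k m
    using ne by (simp add: c_def)
  then have "(\<Sum>k\<in>I. c k * G k m) = G k1 m - G k2 m" for m
    using assms(2-4) by (simp add: sum_subtractf)
  then have "(\<Sum>k\<in>I. c k * G k m) = 0" if "m \<in> I" for m
    using assms(5) that by simp
  then have "c k1 = 0" using assms unfolding nonsingular_on_def by blast
  then show False by (simp add: c_def)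
qed

locale paired_blocks =
  fixes G :: "nat \<times> nat \<Rightarrow> nat \<times> nat \<Rightarrow> 'k::field" and P :: "nat \<Rightarrow> nat" and e f :: nat
  assumes P_antimono: "\<And>t r. e \<le> t \<Longrightarrow> t < r \<Longrightarrow> r \<le> f \<Longrightarrow> P r \<le> P t"
    and same_block: "\<And>t i j. e \<le> t \<Longrightarrow> t \<le> f \<Longrightarrow> i < j + P t \<Longrightarrow> j < i + P t \<Longrightarrow>
      G (t, i) (t, j) = 0"
    and pairing: "\<And>t i. e \<le> t \<Longrightarrow> t \<le> f \<Longrightarrow>
      G (t, i) (t, i + P t) \<noteq> 0 \<and> G (t, i + P t) (t, i) \<noteq> 0"
    and cross: "\<And>t r i j. e \<le> t \<Longrightarrow> t < r \<Longrightarrow> r \<le> f \<Longrightarrow>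
      i + P r < j + 2 * P t \<Longrightarrow> j \<le> i + P r \<Longrightarrow> G (t, i) (r, j) = 0 \<and> G (r, j) (t, i) = 0"
begin

abbreviation indices :: "(nat \<times> nat) set" where
  "indices \<equiv> SIGMA t:{e..f}. {..<2 * P t}"

definition partner :: "nat \<times> nat \<Rightarrow> nat \<times> nat" where
  "partner = (\<lambda>(t, i). if P t \<le> i then (t, i - P t) else (t, i + P t))"

text \<open>Second halves of blocks come first, ordered by 2 P t - i and then by t; first halves
  follow, ordered by i - P t and then by decreasing t (shifted by P e resp. f to stay in nat).\<close>
definition rank :: "nat \<times> nat \<Rightarrow> nat \<times> nat \<times> nat" where
  "rank = (\<lambda>(t, i). if P t \<le> i then (0, 2 * P t - i, t) else (1, i + P e - P t, f - t))"

lemma P_le_P_e: "e \<le> t \<Longrightarrow> t \<le> f \<Longrightarrow> P t \<le> P e"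
  using P_antimono[of e t] by (cases "e = t") auto

lemma rank_less_second_half:
  assumes r: "e \<le> r" "r \<le> f" "j < P r" and t: "e \<le> t" "t \<le> f" "i < 2 * P t"
    and ne: "(t, i) \<noteq> (r, j + P r)" and nz: "G (t, i) (r, j) \<noteq> 0"
  shows "rank (t, i) < rank (r, j + P r)"
proof (rule ccontr)
  assume not_less: "\<not> ?thesis"
  have "G (t, i) (r, j) = 0"
  proof (cases "P t \<le> i")
    case False
    then show ?thesis
      using cross[of t r i j] cross[of r t j i] same_block[of r i j] P_antimono[of t r]
        P_antimono[of r t] r t
      by (cases t r rule: linorder_cases) auto
  next
    case True
    then have lex: "P r - j < 2 * P t - i \<or> P r - j = 2 * P t - i \<and> r \<le> t"
      using not_less r by (auto simp: rank_def less_prod_def)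
    show ?thesis
      using cross[of t r i j] cross[of r t j i] same_block[of r i j] P_antimono[of r t] r t True lex ne
      by (cases t r rule: linorder_cases) auto
  qed
  then show False using nz by simp
qed

lemma rank_less_first_half:
  assumes r: "e \<le> r" "r \<le> f" "j < P r" and t: "e \<le> t" "t \<le> f" "i < 2 * P t"
    and ne: "(t, i) \<noteq> (r, j)" and nz: "G (t, i) (r, j + P r) \<noteq> 0"
  shows "rank (t, i) < rank (r, j)"
proof (cases "P t \<le> i")
  case True
  then show ?thesis using r by (simp add: rank_def less_prod_def)
next
  case False
  show ?thesis
  proof (rule ccontr)
    assume "\<not> ?thesis"
    then have lex: "j + P e - P r < i + P e - P t \<or>
        j + P e - P r = i + P e - P t \<and> f - r \<le> f - t"
      using r False by (auto simp: rank_def less_prod_def)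
    have "G (t, i) (r, j + P r) = 0"
      using cross[of t r i "j + P r"] cross[of r t "j + P r" i] same_block[of r i "j + P r"]
        P_antimono[of t r] P_antimono[of r t] P_le_P_e[of t] P_le_P_e[of r] r t False lex ne
      by (cases t r rule: linorder_cases) auto
    then show False using nz by simp
  qed
qed

lemma nonsingular_on_indices: "nonsingular_on G indices"
proof (rule nonsingular_on_if_triangular[where \<tau> = partner and \<mu> = rank])
  show "partner k \<in> indices" if "k \<in> indices" for k
    using that by (auto simp: partner_def split: prod.splits)
  show "G k (partner k) \<noteq> 0" if "k \<in> indices" for k
    using that pairing by (auto simp: partner_def split: prod.splits) (metis le_add_diff_inverse2)
next
  fix k k' assume k: "k \<in> indices" and k': "k' \<in> indices"
    and "k' \<noteq> k" "G k' (partner k) \<noteq> 0"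
  obtain r i0 t i where kk: "k = (r, i0)" "k' = (t, i)" by fastforce
  show "rank k' < rank k"
  proof (cases "P r \<le> i0")
    case True
    then show ?thesis
      using rank_less_second_half[of r "i0 - P r" t i] k k' kk \<open>k' \<noteq> k\<close>
        \<open>G k' (partner k) \<noteq> 0\<close>
      by (auto simp: partner_def)
  next
    case False
    then show ?thesis
      using rank_less_first_half[of r i0 t i] k k' kk \<open>k' \<noteq> k\<close> \<open>G k' (partner k) \<noteq> 0\<close>
      by (auto simp: partner_def)
  qed
qed simp

end

lemma bilinear_form_add_scale:
  assumes "bilinear_form scale B"
  shows "B (x + y) z = B x z + B y z" "B (scale a x) z = a * B x z"
    and "B z (x + y) = B z x + B z y" "B z (scale a x) = a * B z x"
  using assms by (auto simp: bilinear_form_def Vector_Spaces.linear_iff)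

lemma bilinear_form_zero:
  assumes "bilinear_form scale B"
  shows "B 0 z = 0" "B z 0 = 0"
proof -
  have "B 0 z = B 0 z + B 0 z" "B z 0 = B z 0 + B z 0"
    using bilinear_form_add_scale(1,3)[OF assms, where x = 0 and y = 0] by simp_all
  then show "B 0 z = 0" "B z 0 = 0" by (simp_all only: add_cancel_right_right)
qed

lemma bilinear_form_sum:
  assumes "bilinear_form scale B"
  shows "B (\<Sum>k\<in>I. scale (c k) (v k)) y = (\<Sum>k\<in>I. c k * B (v k) y)"
    and "B y (\<Sum>k\<in>I. scale (c k) (v k)) = (\<Sum>k\<in>I. c k * B y (v k))"
  by (induction I rule: infinite_finite_induct)
    (simp_all add: bilinear_form_zero[OF assms] bilinear_form_add_scale[OF assms])

lemma alternating_form_skew: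
  assumes "bilinear_form scale B" and "\<forall>x. B x x = 0"
  shows "B y x = - B x y"
proof -
  have "B (x + y) (x + y) = B x x + B x y + B y x + B y y"
    by (simp add: bilinear_form_add_scale[OF assms(1)])
  then show ?thesis using assms(2) by (simp add: eq_neg_iff_add_eq_0 add.commute)
qed

lemma coeffs_eq_zero_if_orthogonal_gram:
  assumes "bilinear_form scale B" and "nonsingular_on (\<lambda>k m. B (\<phi> k) (\<phi> m)) I"
    and "\<And>m. m \<in> I \<Longrightarrow> B (\<Sum>k\<in>I. scale (c k) (\<phi> k)) (\<phi> m) = 0" and "k \<in> I"
  shows "c k = 0"
  using assms unfolding nonsingular_on_def bilinear_form_sum[OF assms(1)] by blast

lemma inj_on_if_nonsingular_gram:
  assumes "nonsingular_on (\<lambda>k m. B (\<phi> k) (\<phi> m)) I" and "finite I"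
  shows "inj_on \<phi> I"
  using nonsingular_on_rows_distinct[OF assms] by (intro inj_onI) simp

lemma two_eq_zero_iff_CHAR: "(2 :: 'a :: field) = 0 \<longleftrightarrow> CHAR('a) = 2"
proof -
  have "(2 :: 'a) = 0 \<longleftrightarrow> CHAR('a) dvd 2"
    using of_nat_eq_0_iff_char_dvd[of 2, where 'a = 'a] by simp
  also have "\<dots> \<longleftrightarrow> CHAR('a) = 2"
  proof
    assume dvd: "CHAR('a) dvd 2"
    then have "CHAR('a) \<le> 2" by (rule dvd_imp_le) simp
    moreover have "CHAR('a) \<noteq> 0" using dvd by (intro notI) simp
    ultimately show "CHAR('a) = 2" using CHAR_not_1[where 'a = 'a] by linarith
  qed simp
  finally show ?thesis .
qed

lemma form_reflexive_cases:
  assumes "bilinear_form scale B"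
    and "(\<forall>x. B x x = 0) \<or> (\<forall>x y. B x y = Q (x + y) - Q x - Q y)"
  obtains \<epsilon> :: "'k::field" where "\<epsilon> \<noteq> 0" "\<And>x y. B y x = \<epsilon> * B x y"
  using assms(2)
proof
  assume "\<forall>x. B x x = 0"
  have skew: "B y x = -1 * B x y" for x y
    using alternating_form_skew[OF assms(1) \<open>\<forall>x. B x x = 0\<close>, of y x] by simp
  show thesis by (rule that[of "-1"]) (simp, rule skew)
next
  assume polar: "\<forall>x y. B x y = Q (x + y) - Q x - Q y"
  show thesis by (rule that[of 1]) (simp_all add: polar add.commute)
qed

context vector_space
begin

lemma quadratic_form_zero: "quadratic_form scale Q \<Longrightarrow> Q 0 = 0"
  unfolding quadratic_form_def by (metis scale_zero_left mult_zero_left zero_power2)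

lemma span_image_eq_range_sum:
  assumes "finite I" and "inj_on \<phi> I"
  shows "span (\<phi> ` I) = range (\<lambda>c. \<Sum>k\<in>I. scale (c k) (\<phi> k))"
  unfolding span_finite[OF finite_imageI[OF assms(1)]]
proof (intro equalityI subsetI)
  fix x assume "x \<in> range (\<lambda>u. \<Sum>v\<in>\<phi> ` I. u v *s v)"
  then obtain u where "x = (\<Sum>k\<in>I. (u \<circ> \<phi>) k *s \<phi> k)"
    using assms(2) by (auto simp: sum.reindex)
  then show "x \<in> range (\<lambda>c. \<Sum>k\<in>I. c k *s \<phi> k)" by blast
next
  fix x assume "x \<in> range (\<lambda>c. \<Sum>k\<in>I. c k *s \<phi> k)"
  then obtain c where "x = (\<Sum>v\<in>\<phi> ` I. (c \<circ> the_inv_into I \<phi>) v *s v)"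
    using assms(2) by (auto simp: sum.reindex the_inv_into_f_f)
  then show "x \<in> range (\<lambda>u. \<Sum>v\<in>\<phi> ` I. u v *s v)" by blast
qed

lemma independent_if_nonsingular_gram:
  assumes "bilinear_form scale B" and "nonsingular_on (\<lambda>k m. B (\<phi> k) (\<phi> m)) I" and "finite I"
  shows "independent (\<phi> ` I)"
proof (rule independent_if_scalars_zero)
  have inj: "inj_on \<phi> I" by (rule inj_on_if_nonsingular_gram[of B \<phi> I, OF assms(2,3)])
  fix h v assume "(\<Sum>x\<in>\<phi> ` I. h x *s x) = 0" and "v \<in> \<phi> ` I"
  then obtain k where "(\<Sum>k\<in>I. h (\<phi> k) *s \<phi> k) = 0" "k \<in> I" "v = \<phi> k"
    using inj by (auto simp: sum.reindex)
  then show "h v = 0"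
    using coeffs_eq_zero_if_orthogonal_gram[OF assms(1,2), of "h \<circ> \<phi>"]
    by (simp add: bilinear_form_zero[OF assms(1)])
qed (use assms(3) in simp)

lemma radical_on_span_insert_subset:
  assumes "bilinear_form scale B" and "nonsingular_on (\<lambda>k m. B (\<phi> k) (\<phi> m)) I" and "finite I"
    and "\<And>k. k \<in> I \<Longrightarrow> B u (\<phi> k) = 0"
  shows "radical_on B (span (insert u (\<phi> ` I))) \<subseteq> range (\<lambda>s. s *s u)"
proof
  fix x assume x: "x \<in> radical_on B (span (insert u (\<phi> ` I)))"
  then obtain s where "x - s *s u \<in> span (\<phi> ` I)" by (auto simp: radical_on_def span_insert)
  then obtain c where c: "x = s *s u + (\<Sum>k\<in>I. c k *s \<phi> k)"
    using span_image_eq_range_sum[OF assms(3) inj_on_if_nonsingular_gram[of B \<phi> I, OF assms(2,3)]]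
    by (auto simp: diff_eq_eq add.commute)
  have "B (\<Sum>k\<in>I. c k *s \<phi> k) (\<phi> m) = B x (\<phi> m)" if "m \<in> I" for m
    using assms(4)[OF that] by (simp add: c bilinear_form_add_scale[OF assms(1)])
  also have "B x (\<phi> m) = 0" if "m \<in> I" for m
    using x that by (auto simp: radical_on_def intro: span_base)
  finally have "c k = 0" if "k \<in> I" for k
    using coeffs_eq_zero_if_orthogonal_gram[OF assms(1,2)] that by blast
  then show "x \<in> range (\<lambda>s. s *s u)" by (simp add: c) blast
qed

lemma radical_on_span_eq_zero:
  assumes "bilinear_form scale B" and "nonsingular_on (\<lambda>k m. B (\<phi> k) (\<phi> m)) I" and "finite I"
  shows "radical_on B (span (\<phi> ` I)) = {0}"
proof -
  have "radical_on B (span (insert 0 (\<phi> ` I))) \<subseteq> {0}"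
    using radical_on_span_insert_subset[OF assms, of 0] bilinear_form_zero[OF assms(1)] by auto
  then show ?thesis
    using bilinear_form_zero[OF assms(1)] by (auto simp: radical_on_def span_zero)
qed

lemma radical_on_span_insert_eq_zero:
  assumes "bilinear_form scale B" and "nonsingular_on (\<lambda>k m. B (\<phi> k) (\<phi> m)) I" and "finite I"
    and "\<And>k. k \<in> I \<Longrightarrow> B u (\<phi> k) = 0" and "B u u \<noteq> 0"
  shows "radical_on B (span (insert u (\<phi> ` I))) = {0}"
proof
  show "radical_on B (span (insert u (\<phi> ` I))) \<subseteq> {0}"
  proof
    fix x assume x: "x \<in> radical_on B (span (insert u (\<phi> ` I)))"
    then obtain s where "x = s *s u" using radical_on_span_insert_subset[OF assms(1-4)] by blast
    moreover have "B x u = 0" using x by (auto simp: radical_on_def intro: span_base)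
    ultimately show "x \<in> {0}" using assms(5) by (simp add: bilinear_form_add_scale[OF assms(1)])
  qed
  show "{0} \<subseteq> radical_on B (span (insert u (\<phi> ` I)))"
    using bilinear_form_zero[OF assms(1)] by (auto simp: radical_on_def span_zero)
qed

lemma span_insert_eq_UNIV_if_dim:
  assumes "bilinear_form scale B" and "nonsingular_on (\<lambda>k m. B (\<phi> k) (\<phi> m)) I" and "finite I"
    and "\<And>k. k \<in> I \<Longrightarrow> B u (\<phi> k) = 0" and "u \<noteq> 0" and "dim (UNIV :: 'b set) = card I + 1"
  shows "span (insert u (\<phi> ` I)) = UNIV"
proof -
  let ?S = "insert u (\<phi> ` I)"
  have inj: "inj_on \<phi> I" using assms(2,3) by (rule inj_on_if_nonsingular_gram)
  have "u \<notin> span (\<phi> ` I)"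
  proof
    assume "u \<in> span (\<phi> ` I)"
    then obtain c where c: "u = (\<Sum>k\<in>I. c k *s \<phi> k)"
      using span_image_eq_range_sum[OF assms(3) inj] by auto
    have "c k = 0" if "k \<in> I" for k
      by (rule coeffs_eq_zero_if_orthogonal_gram[OF assms(1,2) _ that])
        (simp add: c[symmetric] assms(4))
    then show False using c assms(5) by simp
  qed
  then have indep: "independent ?S"
    using independent_insertI independent_if_nonsingular_gram[OF assms(1-3)] by blast
  have card: "card ?S = card I + 1"
  proof -
    have "u \<notin> \<phi> ` I" using \<open>u \<notin> span (\<phi> ` I)\<close> span_superset by blast
    then show ?thesis using card_image[OF inj] assms(3) by simp
  qed
  obtain Bs where Bs: "Bs \<subseteq> UNIV" "independent Bs" "UNIV \<subseteq> span Bs"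
    "card Bs = dim (UNIV :: 'b set)"
    by (rule basis_exists)
  have "finite Bs" using Bs(4) assms(6) by (intro card_ge_0_finite) simp
  show ?thesis
  proof (rule ccontr)
    assume "span ?S \<noteq> UNIV"
    then obtain z where z: "z \<notin> span ?S" by auto
    then have "z \<notin> ?S" by (meson span_base)
    have "independent (insert z ?S)" by (rule independent_insertI[OF z indep])
    then have "card (insert z ?S) \<le> card Bs"
      using independent_span_bound[OF \<open>finite Bs\<close>] Bs(3) by auto
    moreover have "card (insert z ?S) = card I + 2"
      using \<open>z \<notin> ?S\<close> card assms(3) by simp
    ultimately show False using Bs(4) assms(6) by simp
  qed
qed

lemma Vperp_eq_range_if_span:
  assumes "bilinear_form scale B" and "nonsingular_on (\<lambda>k m. B (\<phi> k) (\<phi> m)) I" and "finite I"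
    and "\<And>k. k \<in> I \<Longrightarrow> B u (\<phi> k) = 0" and "B u u = 0" and "span (insert u (\<phi> ` I)) = UNIV"
  shows "Vperp B = range (\<lambda>s. s *s u)"
proof
  show "Vperp B \<subseteq> range (\<lambda>s. s *s u)"
    using radical_on_span_insert_subset[OF assms(1-4)] assms(6)
    by (simp add: Vperp_def radical_on_def)
  have "B u z = 0" for z
  proof -
    have "z \<in> span (insert u (\<phi> ` I))" using assms(6) by simp
    then obtain s c where "z = s *s u + (\<Sum>k\<in>I. c k *s \<phi> k)"
      using span_image_eq_range_sum[OF assms(3) inj_on_if_nonsingular_gram[of B \<phi> I, OF assms(2,3)]]
      by (auto simp: span_insert diff_eq_eq add.commute)
    then show ?thesis
      using assms(4,5)
      by (simp add: bilinear_form_add_scale[OF assms(1)] bilinear_form_sum[OF assms(1)])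
  qed
  then show "range (\<lambda>s. s *s u) \<subseteq> Vperp B"
    by (auto simp: Vperp_def bilinear_form_add_scale[OF assms(1)])
qed

end

lemma le_if_decreasing_on:
  fixes p :: "nat \<Rightarrow> nat"
  assumes "\<And>t. a \<le> t \<Longrightarrow> t < b \<Longrightarrow> p (Suc t) \<le> p t" and "a \<le> t" "t \<le> r" "r \<le> b"
  shows "p r \<le> p t"
  using assms(3,4)
proof (induction r rule: dec_induct)
  case (step n)
  then show ?case using assms(1)[of n] assms(2) by simp
qed simp

definition wvec :: "(nat \<Rightarrow> int \<Rightarrow> 'v) \<Rightarrow> nat \<times> nat \<Rightarrow> 'v" where
  "wvec w = (\<lambda>(t, i). w t (int i))"

lemma adapted_gram_nonsingular:
  assumes adp: "adapted B Q g \<sigma> \<kappa> p w" and pdec: "\<forall>t\<in>{1..<\<sigma>}. p (t + 1) \<le> p t"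
    and refl: "\<And>x y. B y x = \<epsilon> * B x y" and "\<epsilon> \<noteq> 0" and "1 \<le> e" "f \<le> \<sigma>"
  shows "nonsingular_on (\<lambda>k m. B (wvec w k) (wvec w m)) (SIGMA t:{e..f}. {..<2 * p t})"
proof -
  have block: "t \<in> {1..\<sigma>}" if "e \<le> t" "t \<le> f" for t using that assms(5,6) by simp
  interpret paired_blocks "\<lambda>k m. B (wvec w k) (wvec w m)" p e f
  proof
    show "p r \<le> p t" if "e \<le> t" "t < r" "r \<le> f" for t r
      using le_if_decreasing_on[of 1 \<sigma> p t r] pdec that assms(5,6) by simp
    show "B (wvec w (t, i)) (wvec w (t, j)) = 0"
      if "e \<le> t" "t \<le> f" "i < j + p t" "j < i + p t" for t i j
      using adp block[OF that(1,2)] that(3,4) unfolding adapted_def wvec_def by simp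
    show "B (wvec w (t, i)) (wvec w (t, i + p t)) \<noteq> 0 \<and> B (wvec w (t, i + p t)) (wvec w (t, i)) \<noteq> 0"
      if "e \<le> t" "t \<le> f" for t i
      using adp block[OF that] refl[where x = "w t (int i)"] \<open>\<epsilon> \<noteq> 0\<close>
      unfolding adapted_def wvec_def by simp
    show "B (wvec w (t, i)) (wvec w (r, j)) = 0 \<and> B (wvec w (r, j)) (wvec w (t, i)) = 0"
      if "e \<le> t" "t < r" "r \<le> f" "i + p r < j + 2 * p t" "j \<le> i + p r" for t r i j
      using adp that assms(5,6) refl[where x = "w t (int i)"] unfolding adapted_def wvec_def by simp
  qed
  show ?thesis by (rule nonsingular_on_indices)
qed

lemma W_gens_eq_image_wvec:
  "W_gens \<sigma> p w e f = wvec w ` (SIGMA x:{e..f}. {..<twice_p \<sigma> p x})"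
  unfolding W_gens_def wvec_def by (auto simp: image_iff) blast

lemma W_gens_eq_image:
  assumes "f \<le> \<sigma>"
  shows "W_gens \<sigma> p w e f = wvec w ` (SIGMA t:{e..f}. {..<2 * p t})"
  unfolding W_gens_eq_image_wvec using assms by (auto simp: twice_p_def intro!: image_cong Sigma_cong)

lemma W_gens_last_eq_insert:
  assumes "e \<le> \<sigma> + 1"
  shows "W_gens \<sigma> p w e (\<sigma> + 1) =
    insert (w (\<sigma> + 1) 0) (wvec w ` (SIGMA t:{e..\<sigma>}. {..<2 * p t}))"
proof -
  have "{e..\<sigma> + 1} = insert (\<sigma> + 1) {e..\<sigma>}" using assms by auto
  then have "(SIGMA x:{e..\<sigma> + 1}. {..<twice_p \<sigma> p x}) =
      insert (\<sigma> + 1, 0) (SIGMA t:{e..\<sigma>}. {..<2 * p t})"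
    by (auto simp: twice_p_def)
  then show ?thesis by (simp add: W_gens_eq_image_wvec wvec_def)
qed

lemma adapted_last_orthogonal:
  assumes adp: "adapted B Q g \<sigma> 1 p w" and refl: "\<And>x y. B y x = \<epsilon> * B x y"
    and "k \<in> (SIGMA t:{1..\<sigma>}. {..<2 * p t})"
  shows "B (w (\<sigma> + 1) 0) (wvec w k) = 0"
proof -
  obtain t i where k: "k = (t, i)" "1 \<le> t" "t \<le> \<sigma>" "i < 2 * p t" using assms(3) by auto
  then have "B (w t (int i)) (w (\<sigma> + 1) 0) = 0" using adp unfolding adapted_def by simp
  then show ?thesis using refl[where x = "w t (int i)"] k(1) by (simp add: wvec_def)
qed

context vector_space
begin

lemma radical_W_gens_eq_zero:
  assumes "bilinear_form scale B" and "adapted B Q g \<sigma> \<kappa> p w"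
    and "\<forall>t\<in>{1..<\<sigma>}. p (t + 1) \<le> p t"
    and "\<And>x y. B y x = \<epsilon> * B x y" and "\<epsilon> \<noteq> 0" and "1 \<le> e" and "f \<le> \<sigma>"
  shows "radical_on B (span (W_gens \<sigma> p w e f)) = {0}"
  unfolding W_gens_eq_image[OF assms(7)]
  by (rule radical_on_span_eq_zero[OF assms(1) adapted_gram_nonsingular[OF assms(2-7)]]) simp

lemma radical_W_gens_last:
  fixes B :: "'b \<Rightarrow> 'b \<Rightarrow> 'a"
  assumes bil: "bilinear_form scale B" and quad: "quadratic_form scale Q"
    and adp: "adapted B Q g \<sigma> 1 p w" and pdec: "\<forall>t\<in>{1..<\<sigma>}. p (t + 1) \<le> p t"
    and refl: "\<And>x y. B y x = \<epsilon> * B x y" and "\<epsilon> \<noteq> 0" and "1 \<le> e" "e \<le> \<sigma> + 1"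
    and dim: "dim (UNIV :: 'b set) = card (SIGMA t:{1..\<sigma>}. {..<2 * p t}) + 1"
  shows "radical_on B (span (W_gens \<sigma> p w e (\<sigma> + 1))) =
    (if CHAR('a) = 2 then Vperp B else {0})"
proof -
  define u where "u = w (\<sigma> + 1) 0"
  let ?I = "SIGMA t:{e..\<sigma>}. {..<2 * p t}" and ?I1 = "SIGMA t:{1..\<sigma>}. {..<2 * p t}"
  let ?W = "span (insert u (wvec w ` ?I))"
  have W: "W_gens \<sigma> p w e (\<sigma> + 1) = insert u (wvec w ` ?I)"
    using W_gens_last_eq_insert[OF assms(8)] by (simp add: u_def)
  have gram: "nonsingular_on (\<lambda>k m. B (wvec w k) (wvec w m)) ?I"
    "nonsingular_on (\<lambda>k m. B (wvec w k) (wvec w m)) ?I1"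
    using adapted_gram_nonsingular[OF adp pdec refl \<open>\<epsilon> \<noteq> 0\<close>] \<open>1 \<le> e\<close> by simp_all
  have orth1: "B u (wvec w k) = 0" if "k \<in> ?I1" for k
    using adapted_last_orthogonal[OF adp refl that] by (simp add: u_def)
  then have orth: "B u (wvec w k) = 0" if "k \<in> ?I" for k
    using that \<open>1 \<le> e\<close> by auto
  have Buu: "B u u = 2" and "Q u = 1"
    using adp unfolding adapted_def u_def by simp_all
  then have "u \<noteq> 0" using quadratic_form_zero[OF quad] by auto
  show ?thesis
  proof (cases "CHAR('a) = 2")
    case False
    then show ?thesis
      using radical_on_span_insert_eq_zero[OF bil gram(1) _ orth] Buu
        two_eq_zero_iff_CHAR[where 'a = 'a] W
      by simp
  next
    case True
    have "span (insert u (wvec w ` ?I1)) = UNIV"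
      by (rule span_insert_eq_UNIV_if_dim[OF bil gram(2) _ orth1 \<open>u \<noteq> 0\<close> dim]) simp
    then have Vperp: "Vperp B = range (\<lambda>s. s *s u)"
      using Vperp_eq_range_if_span[OF bil gram(2) _ orth1] Buu True two_eq_zero_iff_CHAR[where 'a = 'a]
      by simp
    have "radical_on B ?W \<subseteq> Vperp B"
      using radical_on_span_insert_subset[OF bil gram(1) _ orth] Vperp by simp
    moreover have "Vperp B \<subseteq> ?W"
      unfolding Vperp by (auto intro: span_base span_scale)
    ultimately have "radical_on B ?W = Vperp B"
      by (auto simp: radical_on_def Vperp_def)
    then show ?thesis using True W by simp
  qed
qed

end

theorem mainTheorem4:
  fixes scale :: "'k::field \<Rightarrow> 'v::ab_group_add \<Rightarrow> 'v"
    and B :: "'v \<Rightarrow> 'v \<Rightarrow> 'k" and Q :: "'v \<Rightarrow> 'k"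
    and N \<kappa> \<sigma> :: nat and p :: "nat \<Rightarrow> nat"
    and g :: "'v \<Rightarrow> 'v" and w :: "nat \<Rightarrow> int \<Rightarrow> 'v" and e f :: nat
  assumes vs: "vector_space scale"
    and fin: "\<exists>S. finite S \<and> module.span scale S = UNIV"
    and dim: "vector_space.dim scale (UNIV :: 'v set) = N" and N3: "N \<ge> 3"
    and algc: "alg_closed TYPE('k)"
    and bil: "bilinear_form scale B" and quad: "quadratic_form scale Q"
    and cases: "(Q = (\<lambda>_. 0) \<and> (\<forall>x. B x x = 0) \<and> Vperp B = {0}) \<or>
                (Q \<noteq> (\<lambda>_. 0) \<and> (\<forall>x y. B x y = Q (x + y) - Q x - Q y) \<and> inj_on Q (Vperp B))"
    and kappa: "\<kappa> \<in> {0, 1}" and even: "even (N - \<kappa>)"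
    and pdec: "\<forall>t\<in>{1..<\<sigma>}. p (t + 1) \<le> p t"
    and ppos: "\<forall>t\<in>{1..\<sigma>}. p t \<ge> 1"
    and psum: "(\<Sum>t\<in>{1..\<sigma>}. p t) = (N - \<kappa>) div 2"
    and iso: "isometry scale B Q g"
    and adp: "adapted B Q g \<sigma> \<kappa> p w"
    and ef: "1 \<le> e" "e \<le> f" "f \<le> \<sigma> + \<kappa>"
    and stable: "g ` module.span scale (W_gens \<sigma> p w e f) \<subseteq> module.span scale (W_gens \<sigma> p w e f)"
  shows "radical_on B (module.span scale (W_gens \<sigma> p w e f)) =
           (if \<kappa> = 1 \<and> f = \<sigma> + 1 \<and> CHAR('k) = 2 then Vperp B else {0})"
\<comment> \<open>The radical is computed without the isometry g and the g-stability of W(e,f), algebraic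
  closedness, or positivity of the p(t); finiteness of V already follows from dim V = N > 0.\<close>
proof -
  interpret vector_space scale by (fact vs)
  have "(\<forall>x. B x x = 0) \<or> (\<forall>x y. B x y = Q (x + y) - Q x - Q y)"
    using cases by blast
  then obtain \<epsilon> :: 'k where \<epsilon>: "\<epsilon> \<noteq> 0" "\<And>x y. B y x = \<epsilon> * B x y"
    using form_reflexive_cases[OF bil] by blast
  show ?thesis
  proof (cases "\<kappa> = 1 \<and> f = \<sigma> + 1")
    case True
    have "card (SIGMA t:{1..\<sigma>}. {..<2 * p t}) = N - 1"
      using psum even True by (simp add: sum_distrib_left[symmetric])
    then have "dim (UNIV :: 'v set) = card (SIGMA t:{1..\<sigma>}. {..<2 * p t}) + 1"
      using dim N3 by simp
    then show ?thesis
      using radical_W_gens_last[OF bil quad _ pdec \<epsilon>(2,1) ef(1)] adp ef True by simp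
  next
    case False
    then have "f \<le> \<sigma>" using kappa ef by auto
    then show ?thesis
      using radical_W_gens_eq_zero[OF bil adp pdec \<epsilon>(2,1) ef(1)] False by simp
  qed
qed

end
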